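(* Let $S$ be a subcartesian space and let $S_{reg}$ be the set of all structurally regular points of $S$. Then $S_{reg}$ is open and dense in $S$.
   Context: A differential space (in the sense of Sikorski) is a set $S$ together with a family $C^\infty(S)$ of real-valued functions on $S$, with $S$ carrying the weakest topology making all $f\in C^\infty(S)$ continuous, such that $C^\infty(S)$ is closed under composition with smooth functions $F\in C^\infty(\mathbb{R}^k)$ (i.e. $F(f_1,\dots,f_k)\in C^\infty(S)$ for $f_i\in C^\infty(S)$), and such that any function on $S$ which near every point agrees with some element of $C^\infty(S)$ belongs to $C^\infty(S)$. A smooth map between differential spaces is one whose pull-back preserves smooth functions; a diffeomorphism is a smooth bijection with smooth inverse. Every subset $V$ of a differential space inherits a differential-space structure (a differential subspace); for $V\subseteq\mathbb{R}^n$, a function $f:V\to\mathbb{R}$ is smooth iff for each $x\in V$ there is a neighbourhood $U$ of $x$ in $\mathbb{R}^n$ and $f_x\in C^\infty(\mathbb{R}^n)$ with $f|_{U\cap V}=f_x|_{U\cap V}$. A subcartesian space is a Hausdorff differential space $S$ such that every point has an open neighbourhood diffeomorphic to a differential subspace (not necessarily open) of some $\mathbb{R}^n$. The structural dimension $n_x$ of $S$ at $x\in S$ is the smallest integer $n$ such that some open neighbourhood of $x$ in $S$ is diffeomorphic to a subset of $\mathbb{R}^n$. A point $x\in S$ is structurally regular if there is a neighbourhood $U$ of $x$ in $S$ with $n_y=n_x$ for all $y\in U$. *)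

theory Defs
  imports "HOL-Analysis.Analysis"
begin

text \<open>The topology used is the product topology on nat => real,
  whose restriction to Rn n is the Euclidean topology.\<close>

definition Rn :: "nat \<Rightarrow> (nat \<Rightarrow> real) set" where
  "Rn n = {x. \<forall>i\<ge>n. x i = 0}"

definition pd :: "nat \<Rightarrow> ((nat \<Rightarrow> real) \<Rightarrow> real) \<Rightarrow> (nat \<Rightarrow> real) \<Rightarrow> real" where
  "pd i f x = deriv (\<lambda>t. f (x(i := x i + t))) 0"

fun itpd :: "nat list \<Rightarrow> ((nat \<Rightarrow> real) \<Rightarrow> real) \<Rightarrow> (nat \<Rightarrow> real) \<Rightarrow> real" where
  "itpd [] f = f"
| "itpd (i # is) f = pd i (itpd is f)"

definition smooth_Rn :: "nat \<Rightarrow> ((nat \<Rightarrow> real) \<Rightarrow> real) \<Rightarrow> bool" where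
  "smooth_Rn n f \<longleftrightarrow>
     (\<forall>is. set is \<subseteq> {..<n} \<longrightarrow>
        continuous_on (Rn n) (itpd is f) \<and>
        (\<forall>i<n. \<forall>x\<in>Rn n. (\<lambda>t. itpd is f (x(i := x i + t))) differentiable (at 0)))"

definition Cinf_Rn :: "nat \<Rightarrow> ((nat \<Rightarrow> real) \<Rightarrow> real) set" where
  "Cinf_Rn n = {f. smooth_Rn n f}"

definition dtop :: "'a set \<Rightarrow> ('a \<Rightarrow> real) set \<Rightarrow> 'a topology" where
  "dtop S F = topology_generated_by {{p\<in>S. f p \<in> U} | f U. f \<in> F \<and> open U}"

definition differential_space :: "'a set \<Rightarrow> ('a \<Rightarrow> real) set \<Rightarrow> bool" where
  "differential_space S F \<longleftrightarrow>
     (\<forall>k G fs. smooth_Rn k G \<and> (\<forall>i<k. fs i \<in> F) \<longrightarrow>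
        (\<lambda>p. G (\<lambda>i. if i < k then fs i p else 0)) \<in> F) \<and>
     (\<forall>g. (\<forall>x\<in>S. \<exists>U. openin (dtop S F) U \<and> x \<in> U \<and> (\<exists>f\<in>F. \<forall>y\<in>U. g y = f y))
          \<longrightarrow> g \<in> F)"

definition subspace_funs :: "'a set \<Rightarrow> ('a \<Rightarrow> real) set \<Rightarrow> 'a set \<Rightarrow> ('a \<Rightarrow> real) set" where
  "subspace_funs S F V =
     {g. \<forall>x\<in>V. \<exists>U. openin (dtop S F) U \<and> x \<in> U \<and> (\<exists>f\<in>F. \<forall>y\<in>U \<inter> V. g y = f y)}"

definition smooth_map :: "'a set \<Rightarrow> ('a \<Rightarrow> real) set \<Rightarrow> 'b set \<Rightarrow> ('b \<Rightarrow> real) set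
    \<Rightarrow> ('a \<Rightarrow> 'b) \<Rightarrow> bool" where
  "smooth_map S F S' F' \<phi> \<longleftrightarrow> \<phi> ` S \<subseteq> S' \<and> (\<forall>f\<in>F'. f \<circ> \<phi> \<in> F)"

definition diffeomorphism_ds :: "'a set \<Rightarrow> ('a \<Rightarrow> real) set \<Rightarrow> 'b set \<Rightarrow> ('b \<Rightarrow> real) set
    \<Rightarrow> ('a \<Rightarrow> 'b) \<Rightarrow> bool" where
  "diffeomorphism_ds S F S' F' \<phi> \<longleftrightarrow>
     bij_betw \<phi> S S' \<and> smooth_map S F S' F' \<phi> \<and>
     (\<exists>\<psi>. smooth_map S' F' S F \<psi> \<and> (\<forall>x\<in>S. \<psi> (\<phi> x) = x) \<and> (\<forall>y\<in>S'. \<phi> (\<psi> y) = y))"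

definition diffeo_to_subset_Rn :: "'a set \<Rightarrow> ('a \<Rightarrow> real) set \<Rightarrow> 'a set \<Rightarrow> nat \<Rightarrow> bool" where
  "diffeo_to_subset_Rn S F U n \<longleftrightarrow>
     (\<exists>V \<phi>. V \<subseteq> Rn n \<and>
        diffeomorphism_ds U (subspace_funs S F U) V (subspace_funs (Rn n) (Cinf_Rn n) V) \<phi>)"

definition subcartesian :: "'a set \<Rightarrow> ('a \<Rightarrow> real) set \<Rightarrow> bool" where
  "subcartesian S F \<longleftrightarrow>
     differential_space S F \<and> Hausdorff_space (dtop S F) \<and>
     (\<forall>x\<in>S. \<exists>U n. openin (dtop S F) U \<and> x \<in> U \<and> diffeo_to_subset_Rn S F U n)"

definition struct_dim :: "'a set \<Rightarrow> ('a \<Rightarrow> real) set \<Rightarrow> 'a \<Rightarrow> nat" where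
  "struct_dim S F x =
     (LEAST n. \<exists>U. openin (dtop S F) U \<and> x \<in> U \<and> diffeo_to_subset_Rn S F U n)"

definition structurally_regular :: "'a set \<Rightarrow> ('a \<Rightarrow> real) set \<Rightarrow> 'a \<Rightarrow> bool" where
  "structurally_regular S F x \<longleftrightarrow>
     x \<in> S \<and> (\<exists>U. openin (dtop S F) U \<and> x \<in> U \<and>
        (\<forall>y\<in>U. struct_dim S F y = struct_dim S F x))"

end

theory Submission
  imports Defs
begin

text \<open>The structural dimension can only drop near a point: a chart of minimal dimension at
  \<open>x\<close> is also a chart at every point of its domain. Hence on any open set a point of least
  structural dimension has a neighbourhood on which the dimension is constant, which gives
  density; openness of the set of regular points is immediate from the definition.\<close>

lemma openin_locally_constant_points:
  "openin X {x \<in> topspace X. \<exists>U. openin X U \<and> x \<in> U \<and> (\<forall>y\<in>U. f y = f x)}"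
  (is "openin X ?R")
proof (subst openin_subopen, intro ballI)
  fix x assume "x \<in> ?R"
  then obtain U where U: "openin X U" "x \<in> U" "\<forall>y\<in>U. f y = f x" by blast
  have "U \<subseteq> ?R"
  proof
    fix y assume "y \<in> U"
    then have "\<forall>z\<in>U. f z = f y"
      using U(3) by simp
    then show "y \<in> ?R"
      using U(1) \<open>y \<in> U\<close> openin_subset[OF U(1)] by blast
  qed
  then show "\<exists>T. openin X T \<and> x \<in> T \<and> T \<subseteq> ?R"
    using U by blast
qed

lemma dense_locally_constant_points:
  fixes f :: "'a \<Rightarrow> nat"
  assumes drop: "\<And>x. x \<in> topspace X \<Longrightarrow> \<exists>U. openin X U \<and> x \<in> U \<and> (\<forall>y\<in>U. f y \<le> f x)"
  shows "X closure_of {x \<in> topspace X. \<exists>U. openin X U \<and> x \<in> U \<and> (\<forall>y\<in>U. f y = f x)}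
       = topspace X"
    (is "X closure_of ?R = _")
proof (rule antisym)
  show "X closure_of ?R \<subseteq> topspace X"
    by (rule closure_of_subset_topspace)
  show "topspace X \<subseteq> X closure_of ?R"
  proof
    fix z assume z: "z \<in> topspace X"
    show "z \<in> X closure_of ?R"
      unfolding in_closure_of
    proof (intro conjI allI impI z)
      fix W assume W: "z \<in> W \<and> openin X W"
      obtain x where x: "x \<in> W" "\<And>y. y \<in> W \<Longrightarrow> f x \<le> f y"
        using ex_has_least_nat[of "\<lambda>y. y \<in> W" z f] W by auto
      have "x \<in> topspace X"
        using x(1) W openin_subset by blast
      then obtain U where U: "openin X U" "x \<in> U" "\<forall>y\<in>U. f y \<le> f x"
        using drop by blast
      have "openin X (U \<inter> W)"
        using U(1) W by blast
      moreover have "\<forall>y\<in>U \<inter> W. f y = f x"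
        using U(3) x(2) by (meson IntD1 IntD2 le_antisym)
      ultimately have "x \<in> ?R"
        using \<open>x \<in> topspace X\<close> U(2) x(1) by blast
      then show "\<exists>y. y \<in> ?R \<and> y \<in> W"
        using x(1) by blast
    qed
  qed
qed

lemma topspace_dtop_subcartesian:
  assumes "subcartesian S F"
  shows "topspace (dtop S F) = S"
proof
  show "topspace (dtop S F) \<subseteq> S"
    unfolding dtop_def by auto
  show "S \<subseteq> topspace (dtop S F)"
    using assms unfolding subcartesian_def by (auto dest: openin_subset)
qed

lemma struct_dim_chart:
  assumes "subcartesian S F" "x \<in> S"
  obtains U where "openin (dtop S F) U" "x \<in> U" "diffeo_to_subset_Rn S F U (struct_dim S F x)"
proof -
  from assms obtain U n where "openin (dtop S F) U \<and> x \<in> U \<and> diffeo_to_subset_Rn S F U n"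
    unfolding subcartesian_def by blast
  then have "\<exists>U. openin (dtop S F) U \<and> x \<in> U \<and> diffeo_to_subset_Rn S F U (struct_dim S F x)"
    unfolding struct_dim_def by (intro LeastI) blast
  then show ?thesis
    using that by blast
qed

lemma struct_dim_le:
  assumes "openin (dtop S F) U" "y \<in> U" "diffeo_to_subset_Rn S F U n"
  shows "struct_dim S F y \<le> n"
  unfolding struct_dim_def using assms by (intro Least_le) blast

lemma struct_dim_locally_le:
  assumes "subcartesian S F" "x \<in> S"
  shows "\<exists>U. openin (dtop S F) U \<and> x \<in> U \<and> (\<forall>y\<in>U. struct_dim S F y \<le> struct_dim S F x)"
  using struct_dim_chart[OF assms] struct_dim_le by metis

theorem mainTheorem1:
  fixes S :: "'a set" and F :: "('a \<Rightarrow> real) set"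
  assumes "subcartesian S F"
  shows "openin (dtop S F) {x\<in>S. structurally_regular S F x}
       \<and> (dtop S F) closure_of {x\<in>S. structurally_regular S F x} = S"
proof -
  have top: "topspace (dtop S F) = S"
    using assms by (rule topspace_dtop_subcartesian)
  have regular_eq: "{x\<in>S. structurally_regular S F x} =
      {x \<in> topspace (dtop S F). \<exists>U. openin (dtop S F) U \<and> x \<in> U \<and>
         (\<forall>y\<in>U. struct_dim S F y = struct_dim S F x)}"
    unfolding structurally_regular_def top by blast
  have "dtop S F closure_of {x\<in>S. structurally_regular S F x} = topspace (dtop S F)"
    unfolding regular_eq
    by (rule dense_locally_constant_points) (use struct_dim_locally_le[OF assms] top in simp)
  then show ?thesis
    using openin_locally_constant_points[of "dtop S F"] unfolding regular_eq top by simp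
qed

end
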